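(* Let $L:\mathcal{R}\to\mathbb{R}^{\mathcal{Y}}_+$ be a loss with a finite representative set, and let $\mathcal{R}'$ be the union of all minimum representative sets for $L$. Then $\mathcal{R}'=\mathcal{R}\setminus\mathrm{red}(L)$.
   Context: $\mathcal{Y}$ is a finite label set, $\Delta_{\mathcal{Y}}$ the simplex, $\mathbb{R}^{\mathcal{Y}}_+$ the nonnegative orthant. A loss $L:\mathcal{R}\to\mathbb{R}^{\mathcal{Y}}_+$ is minimizable if $\inf_r\langle p,L(r)\rangle$ is attained for every $p$; it then elicits $\Gamma=\mathrm{prop}[L]$, $\Gamma(p)=\arg\min_r\langle p,L(r)\rangle$, with level sets $\Gamma_r=\{p:r\in\Gamma(p)\}$. $\mathcal{S}$ is representative for $L$ if $\Gamma(p)\cap\mathcal{S}\neq\emptyset$ for all $p$; minimum representative if of smallest cardinality. $\mathrm{red}(L)=\{r\in\mathcal{R}:\exists r'\in\mathcal{R},\ \Gamma_r\subsetneq\Gamma_{r'}\}$ is the set of strictly redundant reports. *)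

theory Defs
  imports Complex_Main
begin

text \<open>Labels: a finite type 'y. Reports: the type 'r (the report set R is UNIV).
  A loss is a map L :: 'r \<Rightarrow> ('y \<Rightarrow> real).\<close>

definition simplex :: "('y::finite \<Rightarrow> real) set" where
  "simplex = {p. (\<forall>y. 0 \<le> p y) \<and> (\<Sum>y\<in>UNIV. p y) = 1}"

definition exp_loss :: "('y::finite \<Rightarrow> real) \<Rightarrow> ('y \<Rightarrow> real) \<Rightarrow> real" where
  "exp_loss p l = (\<Sum>y\<in>UNIV. p y * l y)"

definition nonneg_loss :: "('r \<Rightarrow> ('y::finite \<Rightarrow> real)) \<Rightarrow> bool" where
  "nonneg_loss L \<longleftrightarrow> (\<forall>r y. 0 \<le> L r y)"

definition minimizable :: "('r \<Rightarrow> ('y::finite \<Rightarrow> real)) \<Rightarrow> bool" where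
  "minimizable L \<longleftrightarrow> (\<forall>p\<in>simplex. \<exists>r. \<forall>r'. exp_loss p (L r) \<le> exp_loss p (L r'))"

definition prop_of :: "('r \<Rightarrow> ('y::finite \<Rightarrow> real)) \<Rightarrow> ('y \<Rightarrow> real) \<Rightarrow> 'r set" where
  "prop_of L p = {r. \<forall>r'. exp_loss p (L r) \<le> exp_loss p (L r')}"

definition level_set :: "('r \<Rightarrow> ('y::finite \<Rightarrow> real)) \<Rightarrow> 'r \<Rightarrow> ('y \<Rightarrow> real) set" where
  "level_set L r = {p\<in>simplex. r \<in> prop_of L p}"

definition representative :: "('r \<Rightarrow> ('y::finite \<Rightarrow> real)) \<Rightarrow> 'r set \<Rightarrow> bool" where
  "representative L S \<longleftrightarrow> (\<forall>p\<in>simplex. prop_of L p \<inter> S \<noteq> {})"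

text \<open>Minimum representative: representative and of smallest cardinality, i.e.
  |S| \<le> |T| (injection of S into T) for every representative T.\<close>
definition min_representative :: "('r \<Rightarrow> ('y::finite \<Rightarrow> real)) \<Rightarrow> 'r set \<Rightarrow> bool" where
  "min_representative L S \<longleftrightarrow> representative L S \<and>
     (\<forall>T. representative L T \<longrightarrow> (\<exists>f. inj_on f S \<and> f ` S \<subseteq> T))"

definition red :: "('r \<Rightarrow> ('y::finite \<Rightarrow> real)) \<Rightarrow> 'r set" where
  "red L = {r. \<exists>r'. level_set L r \<subset> level_set L r'}"

end

(* Given a finite representative set S, every nonempty level set \<Gamma>_r lies inside some \<Gamma>_s
   with s \<in> S: otherwise pick p_s \<in> \<Gamma>_r - \<Gamma>_s for each s \<in> S; a report of S that is optimal
   at the average of the p_s is, by linearity of the expected loss and optimality of r at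
   each p_s, optimal at every p_s, which is absurd.  Hence a minimum representative set
   cannot contain a strictly redundant report r (remove r, keep the s with \<Gamma>_r \<subset> \<Gamma>_s), and a
   non-redundant r can be exchanged for the s \<in> S with \<Gamma>_r = \<Gamma>_s in any minimum
   representative set S. *)
theory Submission
  imports Defs "HOL-Library.Equipollence"
begin

definition uniform_mixture :: "'w set \<Rightarrow> ('w \<Rightarrow> 'y \<Rightarrow> real) \<Rightarrow> 'y \<Rightarrow> real" where
  "uniform_mixture W c = (\<lambda>y. (\<Sum>w\<in>W. c w y) / card W)"

lemma exp_loss_uniform_mixture:
  "exp_loss (uniform_mixture W c) l = (\<Sum>w\<in>W. exp_loss (c w) l) / card W"
proof -
  have "exp_loss (uniform_mixture W c) l = (\<Sum>y\<in>UNIV. \<Sum>w\<in>W. c w y * l y) / card W"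
    unfolding exp_loss_def uniform_mixture_def
    by (simp add: sum_divide_distrib sum_distrib_right)
  also have "\<dots> = (\<Sum>w\<in>W. exp_loss (c w) l) / card W"
    unfolding exp_loss_def by (subst sum.swap) simp
  finally show ?thesis .
qed

lemma uniform_mixture_in_simplex:
  assumes "finite W" "W \<noteq> {}" "c ` W \<subseteq> simplex"
  shows "uniform_mixture W c \<in> simplex"
proof -
  have "(\<Sum>y\<in>UNIV. uniform_mixture W c y) = (\<Sum>w\<in>W. \<Sum>y\<in>UNIV. c w y) / card W"
    unfolding uniform_mixture_def by (simp add: sum_divide_distrib[symmetric]) (subst sum.swap, simp)
  also have "\<dots> = 1"
    using assms by (simp add: simplex_def image_subset_iff)
  finally show ?thesis
    using assms by (auto simp: simplex_def uniform_mixture_def intro!: sum_nonneg divide_nonneg_nonneg)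
qed

lemma level_set_uniform_mixture:
  assumes "finite W" "W \<noteq> {}" and mem: "c ` W \<subseteq> level_set L r"
    and opt: "s \<in> prop_of L (uniform_mixture W c)"
  shows "c ` W \<subseteq> level_set L s"
proof -
  define gap where "gap w = exp_loss (c w) (L s) - exp_loss (c w) (L r)" for w
  have gap_nonneg: "\<forall>w\<in>W. 0 \<le> gap w"
    using mem by (auto simp: gap_def level_set_def prop_of_def)
  have "(\<Sum>w\<in>W. gap w) / card W
      = exp_loss (uniform_mixture W c) (L s) - exp_loss (uniform_mixture W c) (L r)"
    by (simp add: gap_def exp_loss_uniform_mixture sum_subtractf diff_divide_distrib)
  also have "\<dots> \<le> 0"
    using opt by (simp add: prop_of_def)
  finally have "(\<Sum>w\<in>W. gap w) \<le> 0"
    using assms(1,2) by (simp add: divide_le_0_iff)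
  with gap_nonneg have "\<forall>w\<in>W. gap w = 0"
    using sum_nonneg_eq_0_iff[OF assms(1)] sum_nonneg[of W gap] by (metis order_antisym)
  then show ?thesis
    using mem by (auto simp: gap_def level_set_def prop_of_def)
qed

lemma representative_covers_level_set:
  assumes "finite S" and rep: "representative L S" and "level_set L r \<noteq> {}"
  shows "\<exists>s\<in>S. level_set L r \<subseteq> level_set L s"
proof (rule ccontr)
  assume "\<not> ?thesis"
  then have "\<forall>s\<in>S. \<exists>p. p \<in> level_set L r - level_set L s"
    by blast
  then obtain c where c: "\<And>s. s \<in> S \<Longrightarrow> c s \<in> level_set L r - level_set L s"
    by metis
  have "S \<noteq> {}"
    using rep \<open>level_set L r \<noteq> {}\<close> by (auto simp: representative_def level_set_def)
  moreover have "c ` S \<subseteq> level_set L r" "c ` S \<subseteq> simplex"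
    using c by (auto simp: level_set_def)
  ultimately obtain s where "s \<in> S" "s \<in> prop_of L (uniform_mixture S c)"
    using rep uniform_mixture_in_simplex[OF \<open>finite S\<close>] by (force simp: representative_def)
  then show False
    using level_set_uniform_mixture[OF \<open>finite S\<close> \<open>S \<noteq> {}\<close> \<open>c ` S \<subseteq> level_set L r\<close>] c
    by blast
qed

lemma representative_exchange:
  fixes L :: "'r \<Rightarrow> 'y::finite \<Rightarrow> real"
  assumes "representative L S" "s \<in> S" "level_set L s \<subseteq> level_set L r"
  shows "representative L (insert r (S - {s}))"
  unfolding representative_def
proof
  fix p :: "'y \<Rightarrow> real"
  assume "p \<in> simplex"
  then obtain t where "t \<in> S" "t \<in> prop_of L p"
    using assms(1) by (auto simp: representative_def)
  then show "prop_of L p \<inter> insert r (S - {s}) \<noteq> {}"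
    using assms(3) \<open>p \<in> simplex\<close> by (cases "t = s") (auto simp: level_set_def)
qed

lemma simplex_nonempty: "(simplex :: ('y::finite \<Rightarrow> real) set) \<noteq> {}"
proof -
  have "card (UNIV :: 'y set) \<noteq> 0"
    by simp
  then have "(\<lambda>_ :: 'y. 1 / card (UNIV :: 'y set)) \<in> simplex"
    by (simp add: simplex_def)
  then show ?thesis
    by blast
qed

lemma red_if_level_set_empty:
  fixes L :: "'r \<Rightarrow> 'y::finite \<Rightarrow> real"
  assumes "representative L S" "level_set L r = {}"
  shows "r \<in> red L"
proof -
  obtain p :: "'y \<Rightarrow> real" where "p \<in> simplex"
    using simplex_nonempty by blast
  with assms(1) obtain t where "t \<in> prop_of L p"
    by (auto simp: representative_def)
  then have "level_set L r \<subset> level_set L t"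
    using assms(2) \<open>p \<in> simplex\<close> by (auto simp: level_set_def)
  then show ?thesis
    by (auto simp: red_def)
qed

lemma min_representative_iff_card:
  assumes "finite S\<^sub>0" "representative L S\<^sub>0"
  shows "min_representative L S \<longleftrightarrow> finite S \<and> representative L S \<and>
           (\<forall>T. finite T \<and> representative L T \<longrightarrow> card S \<le> card T)"
proof
  assume S: "min_representative L S"
  then have "S \<lesssim> S\<^sub>0"
    using assms(2) by (simp add: min_representative_def lepoll_def)
  then have "finite S"
    using assms(1) by (meson finite_subset finite_imageD lepoll_def)
  with S show "finite S \<and> representative L S \<and>
           (\<forall>T. finite T \<and> representative L T \<longrightarrow> card S \<le> card T)"
    by (auto simp: min_representative_def lepoll_def[symmetric] lepoll_iff_card_le)
next
  assume S: "finite S \<and> representative L S \<and>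
           (\<forall>T. finite T \<and> representative L T \<longrightarrow> card S \<le> card T)"
  have "S \<lesssim> T" if "representative L T" for T
    using S that by (cases "finite T") (auto simp: lepoll_iff_card_le finite_lepoll_infinite)
  with S show "min_representative L S"
    by (simp add: min_representative_def lepoll_def)
qed

lemma min_representative_disjoint_red:
  assumes "finite S\<^sub>0" "representative L S\<^sub>0" and "min_representative L S"
  shows "S \<inter> red L = {}"
proof (rule ccontr)
  assume "S \<inter> red L \<noteq> {}"
  then obtain r r' where "r \<in> S" and r': "level_set L r \<subset> level_set L r'"
    by (auto simp: red_def)
  have S: "finite S" "representative L S"
    and S_min: "\<And>T. finite T \<Longrightarrow> representative L T \<Longrightarrow> card S \<le> card T"
    using assms min_representative_iff_card by blast+
  obtain s where "s \<in> S" "level_set L r' \<subseteq> level_set L s"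
    using representative_covers_level_set[OF S] r' by blast
  with r' have "s \<in> S - {r}" "level_set L r \<subseteq> level_set L s"
    by auto
  then have "representative L (insert s (S - {r}))"
    using representative_exchange[OF S(2) \<open>r \<in> S\<close>] by blast
  moreover have "insert s (S - {r}) = S - {r}"
    using \<open>s \<in> S - {r}\<close> by blast
  ultimately have "representative L (S - {r})"
    by simp
  then have "card S \<le> card (S - {r})"
    using S_min S(1) by simp
  with \<open>r \<in> S\<close> S(1) show False
    using card_Diff1_less[of S r] by linarith
qed

lemma not_red_in_min_representative:
  assumes "finite S\<^sub>0" "representative L S\<^sub>0" and "r \<notin> red L"
  shows "\<exists>S. min_representative L S \<and> r \<in> S"
proof -
  obtain S where S: "finite S" "representative L S"
    and S_min: "\<forall>T. finite T \<and> representative L T \<longrightarrow> card S \<le> card T"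
    using ex_has_least_nat[of "\<lambda>S. finite S \<and> representative L S" S\<^sub>0 card] assms(1,2) by blast
  have "level_set L r \<noteq> {}"
    using red_if_level_set_empty[OF S(2)] assms(3) by blast
  then obtain s where "s \<in> S" "level_set L r \<subseteq> level_set L s"
    using representative_covers_level_set[OF S] by blast
  then have "level_set L s \<subseteq> level_set L r"
    using assms(3) by (auto simp: red_def)
  define S' where "S' = insert r (S - {s})"
  have "representative L S'"
    unfolding S'_def by (rule representative_exchange) fact+
  moreover have "finite S'" "card S' \<le> card S"
    using S(1) \<open>s \<in> S\<close> card_Suc_Diff1[of S s] by (auto simp: S'_def card_insert_if)
  ultimately have "min_representative L S'"
    using S_min min_representative_iff_card[OF assms(1,2)] by (meson order_trans)
  then show ?thesis
    by (auto simp: S'_def)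
qed

theorem proposition5:
  fixes L :: "'r \<Rightarrow> ('y::finite \<Rightarrow> real)"
  assumes "nonneg_loss L"
    and "minimizable L"
    and "\<exists>S. finite S \<and> representative L S"
  shows "\<Union>{S. min_representative L S} = UNIV - red L"
proof -
  obtain S\<^sub>0 where S\<^sub>0: "finite S\<^sub>0" "representative L S\<^sub>0"
    using assms(3) by blast
  show ?thesis
  proof
    show "\<Union>{S. min_representative L S} \<subseteq> UNIV - red L"
      using min_representative_disjoint_red[OF S\<^sub>0] by blast
    show "UNIV - red L \<subseteq> \<Union>{S. min_representative L S}"
      using not_red_in_min_representative[OF S\<^sub>0] by blast
  qed
qed

end
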